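(* Let $\theta$ be an irrational number whose best rational approximants $(p_n/q_n)_{n\ge0}$ satisfy $\lim_{n\to\infty} q_n^{-1}\log q_{n+1}=+\infty$. Let $S$ be a countable dense subset of $\mathbb{C}\times\{z\in\mathbb{C}: |z|>1\}$. Then there exist a subsequence $q'=(q'_n)_{n\ge0}$ of $(q_n)_{n\ge0}$ and a dense $G_\delta$-subset $E_2\subset l^\infty$ such that for every $u\in E_2$, the map $A_{\theta,q',u}$ is a holomorphic automorphism of $\mathbb{C}^2$ with the following properties: (i) $A_{\theta,q',u}$ maps $\mathbb{C}\times\Delta$ onto itself and is holomorphically conjugate on $\mathbb{C}\times\Delta$ to the rotation $R_\theta(w,z)=(e^{2\pi i\theta}w,e^{2\pi i\theta}z)$, i.e. there is a biholomorphism $\Psi$ of $\mathbb{C}\times\Delta$ with $A_{\theta,q',u}=\Psi^{-1}\circ R_\theta\circ\Psi$ there; (ii) for every $(w,z)\in\mathbb{C}\times\{|z|>1\}$ the forward orbit $(A_{\theta,q',u}^{\circ N}(w,z))_{N\ge0}$ is unbounded and recurrent (i.e. $\liminf_{N\to\infty}\|A_{\theta,q',u}^{\circ N}(w,z)-(w,z)\|=0$); (iii) for every $(w,z)\in S$, the sequence $(\|\mathrm{D}A_{\theta,q',u}^{\circ N}(w,z)\|)_{N\ge0}$ is unbounded.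
   Context: For an irrational real $\theta=a_0+\cfrac{1}{a_1+\cfrac{1}{a_2+\cdots}}$ (with $a_0\in\mathbb{Z}$, $a_i\ge1$ integers for $i\ge1$), the best rational approximants are $p_n/q_n=a_0+\cfrac{1}{a_1+\cdots+\cfrac{1}{a_n}}$, $n\ge0$, with $\gcd(p_n,q_n)=1$ and $q_n\ge0$; equivalently $p_{-2}=q_{-1}=0$, $p_{-1}=q_{-2}=1$, $q_{n+1}=a_{n+1}q_n+q_{n-1}$, $p_{n+1}=a_{n+1}p_n+p_{n-1}$. A subsequence $q'=(q'_n)_{n\ge0}$ of $(q_n)$ means $q'_n=q_{k_n}$ for a strictly increasing sequence of indices $k_n$. $l^\infty$ is the complex Banach space of bounded complex sequences $u=(u_m)_{m\ge0}$ with norm $\|u\|_\infty=\sup_m|u_m|$. $\Delta=\{z\in\mathbb{C}:|z|<1\}$. For $\mu\in\mathbb{R}$, a subsequence $q'$ and $u\in l^\infty$, define the power series $\varphi_{\mu,q',u}(z)=z e^{2\pi i\mu}\sum_{n=0}^\infty u_{q'_n}(1-e^{2\pi i q'_n\mu})z^{q'_n}$ (here $u_{q'_n}$ is the $q'_n$-th term of $u$), and $A_{\mu,q',u}(w,z)=(e^{2\pi i\mu}w+\varphi_{\mu,q',u}(z),\,e^{2\pi i\mu}z)$ wherever the series converges. *)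

theory Defs
  imports "HOL-Analysis.Analysis"
begin

fun cf_rem :: "real \<Rightarrow> nat \<Rightarrow> real" where
  "cf_rem \<theta> 0 = \<theta>"
| "cf_rem \<theta> (Suc n) = 1 / (cf_rem \<theta> n - of_int \<lfloor>cf_rem \<theta> n\<rfloor>)"

definition cf_a :: "real \<Rightarrow> nat \<Rightarrow> int" where
  "cf_a \<theta> n = \<lfloor>cf_rem \<theta> n\<rfloor>"

text \<open>Denominators of the convergents: q_0 = 1, q_1 = a_1, q_(n+2) = a_(n+2) q_(n+1) + q_n
  (equivalent to q_(-2) = 1, q_(-1) = 0, q_(n+1) = a_(n+1) q_n + q_(n-1)).\<close>
fun cf_q :: "real \<Rightarrow> nat \<Rightarrow> nat" where
  "cf_q \<theta> 0 = 1"
| "cf_q \<theta> (Suc 0) = nat (cf_a \<theta> 1)"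
| "cf_q \<theta> (Suc (Suc n)) = nat (cf_a \<theta> (Suc (Suc n))) * cf_q \<theta> (Suc n) + cf_q \<theta> n"

text \<open>l^infinity = bounded complex sequences with the sup norm, realised as bcontfun on nat.\<close>
type_synonym linf = "nat \<Rightarrow>\<^sub>C complex"

definition phi_term :: "real \<Rightarrow> (nat \<Rightarrow> nat) \<Rightarrow> linf \<Rightarrow> complex \<Rightarrow> nat \<Rightarrow> complex" where
  "phi_term \<mu> q' u z n =
     apply_bcontfun u (q' n) * (1 - exp (2 * pi * \<i> * of_nat (q' n) * of_real \<mu>)) * z ^ (q' n)"

definition phi :: "real \<Rightarrow> (nat \<Rightarrow> nat) \<Rightarrow> linf \<Rightarrow> complex \<Rightarrow> complex" where
  "phi \<mu> q' u z = z * exp (2 * pi * \<i> * of_real \<mu>) * (\<Sum>n. phi_term \<mu> q' u z n)"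

definition A_map :: "real \<Rightarrow> (nat \<Rightarrow> nat) \<Rightarrow> linf \<Rightarrow> complex \<times> complex \<Rightarrow> complex \<times> complex" where
  "A_map \<mu> q' u p = (exp (2 * pi * \<i> * of_real \<mu>) * fst p + phi \<mu> q' u (snd p),
                     exp (2 * pi * \<i> * of_real \<mu>) * snd p)"

definition rot2 :: "real \<Rightarrow> complex \<times> complex \<Rightarrow> complex \<times> complex" where
  "rot2 \<theta> p = (exp (2 * pi * \<i> * of_real \<theta>) * fst p, exp (2 * pi * \<i> * of_real \<theta>) * snd p)"

definition cmul2 :: "complex \<Rightarrow> complex \<times> complex \<Rightarrow> complex \<times> complex" where
  "cmul2 c v = (c * fst v, c * snd v)"

definition holo2_on :: "(complex \<times> complex \<Rightarrow> complex \<times> complex) \<Rightarrow> (complex \<times> complex) set \<Rightarrow> bool" where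
  "holo2_on f U \<longleftrightarrow> open U \<and>
     (\<forall>x\<in>U. \<exists>D. (f has_derivative D) (at x) \<and> (\<forall>v. D (cmul2 \<i> v) = cmul2 \<i> (D v)))"

definition biholo2_on :: "(complex \<times> complex \<Rightarrow> complex \<times> complex) \<Rightarrow> (complex \<times> complex) set \<Rightarrow> bool" where
  "biholo2_on f U \<longleftrightarrow> holo2_on f U \<and>
     (\<exists>g. holo2_on g U \<and> f ` U \<subseteq> U \<and> g ` U \<subseteq> U \<and>
          (\<forall>x\<in>U. g (f x) = x) \<and> (\<forall>x\<in>U. f (g x) = x))"

definition holo_aut_C2 :: "(complex \<times> complex \<Rightarrow> complex \<times> complex) \<Rightarrow> bool" where
  "holo_aut_C2 f \<longleftrightarrow> biholo2_on f UNIV"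

definition unit_disc :: "complex set" where "unit_disc = ball 0 1"

end

theory Submission
  imports Defs "HOL-Complex_Analysis.Complex_Analysis"
begin

text \<open>Write \<open>lam = e^(2\<pi>i\<theta>)\<close> and pass to a subsequence \<open>q'_n = q_(k_n)\<close> of denominators with
  \<open>q_(k_n + 1) \<ge> 2 ^ ((n + 3) q'_n)\<close>. The map \<open>A\<close> is a shear, and its \<open>N\<close>-th iterate is
  \<open>(lam^N (w + G_N z), lam^N z)\<close> with \<open>G_N z = \<Sum> u_(q'_n) (1 - lam^(N q'_n)) z^(q'_n + 1)\<close>.
  Since \<open>|1 - lam^(N q'_n)| \<le> 2\<pi> N \<parallel>q'_n \<theta>\<parallel> \<le> 2\<pi> N / q_(k_n + 1)\<close>, these series are entire.
  On \<open>\<complex> \<times> \<Delta>\<close> the first one is the coboundary \<open>g z - g (lam z) / lam\<close> of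
  \<open>g z = \<Sum> u_(q'_n) z^(q'_n + 1)\<close>, and \<open>(w, z) \<mapsto> (w + g z, z)\<close> conjugates \<open>A\<close> to the rotation.
  Along \<open>N = q'_j\<close> we get \<open>G_N \<rightarrow> 0\<close>, hence recurrence. Along resonant times \<open>N_j\<close>, for which
  \<open>N_j q'_j \<theta>\<close> lies at distance about \<open>1/4\<close> from \<open>\<int>\<close>, the \<open>j\<close>-th term of \<open>G_(N_j) z\<close> and of
  its derivative has size at least \<open>|u_(q'_j)| |z|^(q'_j)\<close> and dominates the rest; for \<open>|z| > 1\<close>
  and \<open>u\<close> in the open dense set where \<open>limsup |u_(q'_j)| > 0\<close>, orbits and derivatives are
  therefore unbounded.\<close>

section \<open>Continued fractions\<close>

text \<open>Shifted by one index so that the recursions start at \<open>q_(-1) = 0\<close>, \<open>p_(-1) = 1\<close>: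
  \<open>cf_den \<theta> n = q_(n-1)\<close> and \<open>cf_err \<theta> n = q_(n-1) \<theta> - p_(n-1)\<close>.\<close>

definition cf_den :: "real \<Rightarrow> nat \<Rightarrow> nat" where
  "cf_den \<theta> n = (case n of 0 \<Rightarrow> 0 | Suc m \<Rightarrow> cf_q \<theta> m)"

fun cf_err :: "real \<Rightarrow> nat \<Rightarrow> real" where
  "cf_err \<theta> 0 = -1"
| "cf_err \<theta> (Suc 0) = \<theta> - of_int \<lfloor>\<theta>\<rfloor>"
| "cf_err \<theta> (Suc (Suc n)) = of_int (cf_a \<theta> (Suc n)) * cf_err \<theta> (Suc n) + cf_err \<theta> n"

lemma cf_den_0 [simp]: "cf_den \<theta> 0 = 0"
  and cf_den_Suc [simp]: "cf_den \<theta> (Suc n) = cf_q \<theta> n"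
  by (simp_all add: cf_den_def)

lemma cf_rem_not_Rats:
  assumes "\<theta> \<notin> \<rat>"
  shows "cf_rem \<theta> n \<notin> \<rat>"
proof (induction n)
  case 0
  then show ?case using assms by simp
next
  case (Suc n)
  define x where "x = cf_rem \<theta> n"
  show ?case
  proof
    assume "cf_rem \<theta> (Suc n) \<in> \<rat>"
    then have "1 / (x - of_int \<lfloor>x\<rfloor>) \<in> \<rat>"
      by (simp add: x_def)
    then have "x - of_int \<lfloor>x\<rfloor> \<in> \<rat>"
      by (metis Rats_inverse inverse_eq_divide inverse_inverse_eq)
    then have "x \<in> \<rat>"
      by (metis Rats_add Rats_of_int diff_add_cancel)
    then show False
      using Suc by (simp add: x_def)
  qed
qed

lemma cf_rem_gt_1:
  assumes "\<theta> \<notin> \<rat>"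
  shows "1 < cf_rem \<theta> (Suc n)"
proof -
  define x where "x = cf_rem \<theta> n"
  have "x - of_int \<lfloor>x\<rfloor> \<noteq> 0"
    using cf_rem_not_Rats[OF assms, of n] by (metis Rats_of_int eq_iff_diff_eq_0 x_def)
  then have "0 < x - of_int \<lfloor>x\<rfloor>" "x - of_int \<lfloor>x\<rfloor> < 1"
    by linarith+
  then show ?thesis
    by (simp add: x_def less_divide_eq)
qed

lemma cf_a_ge_1:
  assumes "\<theta> \<notin> \<rat>"
  shows "1 \<le> cf_a \<theta> (Suc n)"
  using cf_rem_gt_1[OF assms, of n] unfolding cf_a_def by linarith

lemma cf_q_le_Suc:
  assumes "\<theta> \<notin> \<rat>"
  shows "cf_q \<theta> n \<le> cf_q \<theta> (Suc n)"
proof (cases n)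
  case 0
  then show ?thesis
    using cf_a_ge_1[OF assms, of 0] by simp
next
  case (Suc m)
  have "1 \<le> nat (cf_a \<theta> (Suc (Suc m)))"
    using cf_a_ge_1[OF assms, of "Suc m"] by linarith
  then have "cf_q \<theta> (Suc m) \<le> nat (cf_a \<theta> (Suc (Suc m))) * cf_q \<theta> (Suc m)"
    using mult_le_mono1 by fastforce
  then show ?thesis
    using Suc by (simp add: trans_le_add1)
qed

lemma cf_q_pos:
  assumes "\<theta> \<notin> \<rat>"
  shows "0 < cf_q \<theta> n"
proof (induction n)
  case (Suc n)
  then show ?case
    using cf_q_le_Suc[OF assms, of n] by linarith
qed simp

lemma cf_den_Suc_Suc:
  assumes "\<theta> \<notin> \<rat>"
  shows "real (cf_den \<theta> (Suc (Suc n))) =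
    of_int (cf_a \<theta> (Suc n)) * real (cf_den \<theta> (Suc n)) + real (cf_den \<theta> n)"
  using cf_a_ge_1[OF assms, of n] by (cases n) simp_all

lemma cf_err_Suc:
  assumes "\<theta> \<notin> \<rat>"
  shows "cf_err \<theta> (Suc n) = - cf_err \<theta> n / cf_rem \<theta> (Suc n)"
proof (induction n)
  case 0
  then show ?case by simp
next
  case (Suc n)
  have "cf_rem \<theta> (Suc n) > 0"
    using cf_rem_gt_1[OF assms, of n] by linarith
  then have "cf_err \<theta> n = - cf_rem \<theta> (Suc n) * cf_err \<theta> (Suc n)"
    using Suc by (simp add: field_simps del: cf_rem.simps)
  then have "cf_err \<theta> (Suc (Suc n)) = - (cf_rem \<theta> (Suc n) - of_int (cf_a \<theta> (Suc n))) * cf_err \<theta> (Suc n)"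
    by (simp add: algebra_simps)
  also have "cf_rem \<theta> (Suc n) - of_int (cf_a \<theta> (Suc n)) = 1 / cf_rem \<theta> (Suc (Suc n))"
    by (simp add: cf_a_def)
  finally show ?case
    by (simp del: cf_rem.simps)
qed

lemma cf_err_cross:
  assumes "\<theta> \<notin> \<rat>"
  shows "cf_err \<theta> n * cf_den \<theta> (Suc n) - cf_err \<theta> (Suc n) * cf_den \<theta> n = (-1) ^ Suc n"
  by (induction n) (simp, simp add: cf_den_Suc_Suc[OF assms] algebra_simps del: cf_den_Suc)

lemma cf_err_Ints:
  assumes "\<theta> \<notin> \<rat>"
  shows "real (cf_den \<theta> n) * \<theta> - cf_err \<theta> n \<in> \<int>"
proof -
  have "real (cf_den \<theta> n) * \<theta> - cf_err \<theta> n \<in> \<int> \<and>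
        real (cf_den \<theta> (Suc n)) * \<theta> - cf_err \<theta> (Suc n) \<in> \<int>"
  proof (induction n)
    case 0
    then show ?case by simp
  next
    case (Suc n)
    have "real (cf_den \<theta> (Suc (Suc n))) * \<theta> - cf_err \<theta> (Suc (Suc n)) =
        of_int (cf_a \<theta> (Suc n)) * (real (cf_den \<theta> (Suc n)) * \<theta> - cf_err \<theta> (Suc n))
        + (real (cf_den \<theta> n) * \<theta> - cf_err \<theta> n)"
      by (simp add: cf_den_Suc_Suc[OF assms] algebra_simps del: cf_den_Suc)
    also have "\<dots> \<in> \<int>"
      using Suc by (intro Ints_add Ints_mult) auto
    finally show ?case
      using Suc by simp
  qed
  then show ?thesis ..
qed

lemma abs_cf_err:
  assumes "\<theta> \<notin> \<rat>"
  shows "\<bar>cf_err \<theta> n\<bar> * (real (cf_den \<theta> (Suc n)) + real (cf_den \<theta> n) / cf_rem \<theta> (Suc n)) = 1"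
proof -
  have r: "0 < cf_rem \<theta> (Suc n)"
    using cf_rem_gt_1[OF assms, of n] by linarith
  have "cf_err \<theta> n * (real (cf_den \<theta> (Suc n)) + real (cf_den \<theta> n) / cf_rem \<theta> (Suc n)) = (-1) ^ Suc n"
    using cf_err_cross[OF assms, of n] unfolding cf_err_Suc[OF assms, of n]
    by (simp add: algebra_simps del: cf_den_Suc)
  then have "\<bar>cf_err \<theta> n\<bar> * \<bar>real (cf_den \<theta> (Suc n)) + real (cf_den \<theta> n) / cf_rem \<theta> (Suc n)\<bar> = 1"
    by (metis abs_mult abs_neg_one power_abs power_one)
  then show ?thesis
    using r by simp
qed

lemma cf_err_bounds:
  assumes irr: "\<theta> \<notin> \<rat>"
  shows "real (cf_q \<theta> n) * \<theta> - cf_err \<theta> (Suc n) \<in> \<int>"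
    and "\<bar>cf_err \<theta> (Suc n)\<bar> \<le> 1 / real (cf_q \<theta> (Suc n))"
    and "1 / (2 * real (cf_q \<theta> (Suc n))) \<le> \<bar>cf_err \<theta> (Suc n)\<bar>"
proof -
  show "real (cf_q \<theta> n) * \<theta> - cf_err \<theta> (Suc n) \<in> \<int>"
    using cf_err_Ints[OF irr, of "Suc n"] by simp
  define T where "T = real (cf_q \<theta> (Suc n))"
  define e where "e = \<bar>cf_err \<theta> (Suc n)\<bar>"
  define x where "x = real (cf_q \<theta> n) / cf_rem \<theta> (Suc (Suc n))"
  have eq: "e * T + e * x = 1"
    using abs_cf_err[OF irr, of "Suc n"] by (simp add: e_def T_def x_def distrib_left)
  have T: "0 < T"
    using cf_q_pos[OF irr] by (simp add: T_def)
  have "0 \<le> x"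
    using cf_rem_gt_1[OF irr, of "Suc n"] by (simp add: x_def del: cf_rem.simps)
  moreover have "x \<le> T"
  proof -
    have "x \<le> real (cf_q \<theta> n) / 1"
      unfolding x_def using cf_rem_gt_1[OF irr, of "Suc n"]
      by (intro divide_left_mono) (auto simp del: cf_rem.simps)
    also have "\<dots> \<le> T"
      using cf_q_le_Suc[OF irr] by (simp add: T_def)
    finally show ?thesis .
  qed
  moreover have "0 \<le> e"
    by (simp add: e_def)
  ultimately have "e * T \<le> 1" "1 \<le> 2 * (e * T)"
    using eq mult_left_mono[of x T e] mult_nonneg_nonneg[of e x] by linarith+
  then show "e \<le> 1 / real (cf_q \<theta> (Suc n))" "1 / (2 * real (cf_q \<theta> (Suc n))) \<le> e"
    using T by (simp_all add: T_def field_simps)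
qed

lemma cf_q_eventually_exp_growth:
  assumes irr: "\<theta> \<notin> \<rat>"
    and growth: "filterlim (\<lambda>n. ln (real (cf_q \<theta> (Suc n))) / real (cf_q \<theta> n)) at_top sequentially"
  shows "\<forall>\<^sub>F j in sequentially. 2 ^ (M * cf_q \<theta> j) \<le> cf_q \<theta> (Suc j)"
proof -
  have "\<forall>\<^sub>F j in sequentially. real M * ln 2 \<le> ln (real (cf_q \<theta> (Suc j))) / real (cf_q \<theta> j)"
    using growth by (simp add: filterlim_at_top)
  then show ?thesis
  proof eventually_elim
    case (elim j)
    have pos: "0 < real (cf_q \<theta> j)" "0 < real (cf_q \<theta> (Suc j))"
      using cf_q_pos[OF irr] by auto
    have "real (M * cf_q \<theta> j) * ln 2 \<le> ln (real (cf_q \<theta> (Suc j)))"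
      using elim pos(1) by (simp add: le_divide_eq algebra_simps)
    then have "exp (real (M * cf_q \<theta> j) * ln 2) \<le> real (cf_q \<theta> (Suc j))"
      using pos(2) by (metis exp_le_cancel_iff exp_ln)
    moreover have "exp (real (M * cf_q \<theta> j) * ln 2) = real (2 ^ (M * cf_q \<theta> j))"
      by (simp only: exp_of_nat_mult) simp
    ultimately show ?case
      by (simp only: of_nat_le_iff)
  qed
qed

lemma cf_q_eventually_ge:
  assumes irr: "\<theta> \<notin> \<rat>"
    and growth: "filterlim (\<lambda>n. ln (real (cf_q \<theta> (Suc n))) / real (cf_q \<theta> n)) at_top sequentially"
  shows "\<forall>\<^sub>F j in sequentially. B \<le> cf_q \<theta> j"
proof -
  have "\<forall>\<^sub>F j in sequentially. B \<le> cf_q \<theta> (Suc j)"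
    using cf_q_eventually_exp_growth[OF irr growth, of B]
  proof eventually_elim
    case (elim j)
    have "B < 2 ^ B"
      by (rule less_exp)
    also have "\<dots> \<le> 2 ^ (B * cf_q \<theta> j)"
      using cf_q_pos[OF irr, of j] by (intro power_increasing) auto
    finally show ?case
      using elim by linarith
  qed
  then show ?thesis
    by (rule eventually_sequentially_Suc[THEN iffD1])
qed

lemma lacunary_cf_subsequence:
  assumes irr: "\<theta> \<notin> \<rat>"
    and growth: "filterlim (\<lambda>n. ln (real (cf_q \<theta> (Suc n))) / real (cf_q \<theta> n)) at_top sequentially"
  obtains k where "strict_mono k"
    and "\<And>n. 2 ^ ((n + 3) * cf_q \<theta> (k n)) \<le> cf_q \<theta> (Suc (k n))"
    and "\<And>n. cf_q \<theta> (Suc (k n)) \<le> cf_q \<theta> (k (Suc n))"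
proof -
  define P where "P n x \<longleftrightarrow> 2 ^ ((n + 3) * cf_q \<theta> x) \<le> cf_q \<theta> (Suc x)" for n x
  define Q where "Q x y \<longleftrightarrow> x < y \<and> cf_q \<theta> (Suc x) \<le> cf_q \<theta> y" for x y
  have "\<exists>f. \<forall>n. P n (f n) \<and> Q (f n) (f (Suc n))"
  proof (rule dependent_nat_choice)
    show "\<exists>x. P 0 x"
      using cf_q_eventually_exp_growth[OF irr growth, of 3]
      unfolding P_def eventually_sequentially by auto
  next
    fix x n
    have "\<forall>\<^sub>F y in sequentially. P (Suc n) y \<and> Q x y"
      using cf_q_eventually_exp_growth[OF irr growth, of "Suc n + 3"]
        cf_q_eventually_ge[OF irr growth, of "cf_q \<theta> (Suc x)"] eventually_gt_at_top[of x]
      unfolding P_def Q_def by eventually_elim auto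
    then show "\<exists>y. P (Suc n) y \<and> Q x y"
      unfolding eventually_sequentially by blast
  qed
  then obtain k where "\<forall>n. P n (k n) \<and> Q (k n) (k (Suc n))"
    by blast
  moreover from this have "strict_mono k"
    unfolding Q_def by (auto intro: strict_monoI_Suc)
  ultimately show ?thesis
    using that unfolding P_def Q_def by blast
qed

lemma norm_one_minus_cis_sq: "(cmod (1 - exp (\<i> * complex_of_real y)))\<^sup>2 = 2 - 2 * cos y"
proof -
  have "(cmod (1 - exp (\<i> * complex_of_real y)))\<^sup>2 = (1 - cos y)\<^sup>2 + (sin y)\<^sup>2"
    by (simp only: cmod_power2) (simp add: Re_exp Im_exp)
  then show ?thesis
    by (simp add: power2_eq_square algebra_simps)
qed

lemma norm_one_minus_cis_le: "cmod (1 - exp (\<i> * complex_of_real y)) \<le> \<bar>y\<bar>"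
proof -
  have "(sin (y / 2))\<^sup>2 \<le> (y / 2)\<^sup>2"
    using abs_sin_x_le_abs_x[of "y / 2"] by (metis abs_ge_zero power2_abs power_mono)
  then have "2 - 2 * cos y \<le> y\<^sup>2"
    using cos_double_sin[of "y / 2"] by (simp add: power2_eq_square)
  then have "(cmod (1 - exp (\<i> * complex_of_real y)))\<^sup>2 \<le> \<bar>y\<bar>\<^sup>2"
    by (simp add: norm_one_minus_cis_sq)
  then show ?thesis
    using abs_ge_zero power2_le_imp_le by blast
qed

lemma norm_one_minus_cis_ge:
  assumes "cos y \<le> 0"
  shows "1 \<le> cmod (1 - exp (\<i> * complex_of_real y))"
proof -
  have "1\<^sup>2 \<le> (cmod (1 - exp (\<i> * complex_of_real y)))\<^sup>2"
    using assms by (simp add: norm_one_minus_cis_sq)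
  then show ?thesis
    using norm_ge_zero power2_le_imp_le by blast
qed

lemma suminf_has_field_derivative:
  fixes f f' :: "nat \<Rightarrow> complex \<Rightarrow> complex" and S :: "complex set"
  assumes S: "open S" and x: "x \<in> S"
    and deriv: "\<And>n y. y \<in> S \<Longrightarrow> (f n has_field_derivative f' n y) (at y)"
    and dominated: "\<And>y. y \<in> S \<Longrightarrow> \<exists>d h. 0 < d \<and> summable h \<and>
        (\<forall>\<^sub>F n in sequentially. \<forall>z\<in>ball y d \<inter> S. norm (f n z) \<le> h n)"
  shows "summable (\<lambda>n. f n x)"
    and "((\<lambda>z. \<Sum>n. f n z) has_field_derivative (\<Sum>n. f' n x)) (at x)"
proof -
  obtain g g' where g: "\<And>y. y \<in> S \<Longrightarrow> ((\<lambda>n. f n y) sums g y) \<and> ((\<lambda>n. f' n y) sums g' y)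
      \<and> (g has_field_derivative g' y) (at y)"
    using series_and_derivative_comparison_local[OF S deriv dominated] by metis
  show "summable (\<lambda>n. f n x)"
    using g[OF x] by (auto simp: sums_iff)
  have "(g has_field_derivative (\<Sum>n. f' n x)) (at x)"
    using g[OF x] by (simp add: sums_iff)
  then show "((\<lambda>z. \<Sum>n. f n z) has_field_derivative (\<Sum>n. f' n x)) (at x)"
    by (rule has_field_derivative_transform_within_open[OF _ S x]) (use g in \<open>auto simp: sums_iff\<close>)
qed

lemma has_derivative_shear:
  assumes "(f has_field_derivative f') (at (snd x))"
  shows "((\<lambda>p. (\<alpha> * fst p + f (snd p), \<beta> * snd p)) has_derivative
      (\<lambda>v. (\<alpha> * fst v + f' * snd v, \<beta> * snd v))) (at x)"
proof -
  have "(f has_derivative (\<lambda>h. f' * h)) (at (snd x))"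
    using assms by (simp add: has_field_derivative_def)
  from has_derivative_compose[OF has_derivative_snd[OF has_derivative_ident] this]
  have "((\<lambda>p. f (snd p)) has_derivative (\<lambda>v. f' * snd v)) (at x)"
    by simp
  then show ?thesis
    by (intro has_derivative_Pair has_derivative_add has_derivative_mult_right
        has_derivative_fst has_derivative_snd has_derivative_ident)
qed

lemma holo2_on_shear:
  assumes "open U" and "\<And>x. x \<in> U \<Longrightarrow> (f has_field_derivative f' x) (at (snd x))"
  shows "holo2_on (\<lambda>p. (\<alpha> * fst p + f (snd p), \<beta> * snd p)) U"
  unfolding holo2_on_def
proof (intro conjI ballI exI)
  fix x
  assume "x \<in> U"
  then show "((\<lambda>p. (\<alpha> * fst p + f (snd p), \<beta> * snd p)) has_derivative
      (\<lambda>v. (\<alpha> * fst v + f' x * snd v, \<beta> * snd v))) (at x)"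
    by (intro has_derivative_shear assms(2))
  show "\<forall>v. (\<lambda>v. (\<alpha> * fst v + f' x * snd v, \<beta> * snd v)) (cmul2 \<i> v) =
      cmul2 \<i> ((\<lambda>v. (\<alpha> * fst v + f' x * snd v, \<beta> * snd v)) v)"
    by (simp add: cmul2_def algebra_simps)
qed (rule assms(1))

lemma Suc_mult_self_le_four_power: "(m + 1) * m \<le> (4::nat) ^ m"
proof -
  have "(m + 1) * m \<le> 2 ^ m * 2 ^ m"
    using less_exp[of m] by (intro mult_le_mono) (simp_all add: Suc_le_eq)
  also have "\<dots> = 4 ^ m"
    by (simp flip: power_mult_distrib)
  finally show ?thesis .
qed

section \<open>Dynamics along a lacunary subsequence of denominators\<close>

text \<open>\<open>s n\<close> stands for \<open>q'_n = q_(k_n)\<close>, \<open>T n\<close> for the next denominator \<open>q_(k_n + 1)\<close> and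
  \<open>d n\<close> for the signed distance from \<open>s n \<theta>\<close> to the nearest integer.\<close>

locale lacunary_denominators =
  fixes \<theta> :: real and s T :: "nat \<Rightarrow> nat" and d :: "nat \<Rightarrow> real"
  assumes s_ge_1: "\<And>n. 1 \<le> s n"
    and T_ge_exp: "\<And>n. 2 ^ ((n + 3) * s n) \<le> T n"
    and T_le_s_Suc: "\<And>n. T n \<le> s (Suc n)"
    and s_mult_minus_d_Ints: "\<And>n. real (s n) * \<theta> - d n \<in> \<int>"
    and abs_d_le: "\<And>n. \<bar>d n\<bar> \<le> 1 / real (T n)"
    and abs_d_ge: "\<And>n. 1 / (2 * real (T n)) \<le> \<bar>d n\<bar>"
begin

lemma four_s_le_T: "4 * s n \<le> T n"
proof -
  have "4 * s n < 4 * 2 ^ s n"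
    using less_exp[of "s n"] by simp
  also have "\<dots> = 2 ^ (s n + 2)"
    by simp
  also have "\<dots> \<le> 2 ^ ((n + 3) * s n)"
    using s_ge_1[of n] by (intro power_increasing) (auto simp: algebra_simps)
  also have "\<dots> \<le> T n"
    by (rule T_ge_exp)
  finally show ?thesis
    by simp
qed

lemma s_le_T: "s n \<le> T n"
  using four_s_le_T[of n] by simp

lemma T_pos: "0 < T n"
  using four_s_le_T[of n] s_ge_1[of n] by simp

lemma strict_mono_s: "strict_mono s"
proof (rule strict_monoI_Suc)
  fix n
  show "s n < s (Suc n)"
    using four_s_le_T[of n] s_ge_1[of n] T_le_s_Suc[of n] by simp
qed

lemma s_ge_index: "n \<le> s n"
  by (rule seq_suble[OF strict_mono_s])

lemma s_mono: "m \<le> n \<Longrightarrow> s m \<le> s n"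
  using strict_mono_s by (simp add: strict_mono_less_eq)

lemma T_mono: "m \<le> n \<Longrightarrow> T m \<le> T n"
proof (rule lift_Suc_mono_le[of T])
  fix n
  show "T n \<le> T (Suc n)"
    using T_le_s_Suc[of n] s_le_T[of "Suc n"] by simp
qed

lemma T_le_s: "m < n \<Longrightarrow> T m \<le> s n"
  using T_le_s_Suc[of m] s_mono[of "Suc m" n] by simp

lemma s_abs_d_le: "real (s n) * \<bar>d n\<bar> \<le> 1 / 4"
proof -
  have "real (s n) * \<bar>d n\<bar> \<le> real (s n) * (1 / real (T n))"
    by (intro mult_left_mono abs_d_le) auto
  also have "\<dots> \<le> 1 / 4"
    using four_s_le_T[of n] T_pos[of n] by (simp add: field_simps)
  finally show ?thesis .
qed

lemma abs_d_pos: "0 < \<bar>d n\<bar>"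
proof -
  have "0 < 1 / (2 * real (T n))"
    using T_pos[of n] by simp
  then show ?thesis
    using abs_d_ge[of n] by linarith
qed

lemma d_tendsto_0: "d \<longlonglongrightarrow> 0"
proof (rule Lim_null_comparison[OF _ LIMSEQ_inverse_real_of_nat])
  show "\<forall>\<^sub>F n in sequentially. norm (d n) \<le> inverse (real (Suc n))"
  proof (intro always_eventually allI)
    fix n
    have "Suc n < 2 ^ Suc n"
      by (rule less_exp)
    also have "\<dots> \<le> 2 ^ ((n + 3) * s n)"
    proof (rule power_increasing)
      have "(n + 3) * 1 \<le> (n + 3) * s n"
        using s_ge_1[of n] by (rule mult_le_mono2)
      then show "Suc n \<le> (n + 3) * s n"
        unfolding mult_1_right by linarith
    qed simp
    also have "\<dots> \<le> T n"
      by (rule T_ge_exp)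
    finally have "1 / real (T n) \<le> 1 / real (Suc n)"
      by (intro divide_left_mono) auto
    then show "norm (d n) \<le> inverse (real (Suc n))"
      using abs_d_le[of n] by (simp add: divide_inverse)
  qed
qed

definition lam :: complex where
  "lam = exp (2 * pi * \<i> * complex_of_real \<theta>)"

lemma norm_lam_power [simp]: "cmod (lam ^ N) = 1"
  by (simp add: lam_def norm_power norm_exp_eq_Re)

lemma norm_lam [simp]: "cmod lam = 1"
  using norm_lam_power[of 1] by simp

lemma lam_neq_0 [simp]: "lam \<noteq> 0"
  by (simp add: lam_def)

lemma exp_eq_lam_power: "exp (2 * pi * \<i> * of_nat m * complex_of_real \<theta>) = lam ^ m"
  unfolding lam_def by (simp add: exp_of_nat_mult[symmetric] ac_simps)

lemma lam_power_mult_s: "lam ^ (M * s n) = exp (\<i> * complex_of_real (2 * pi * real M * d n))"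
proof -
  obtain m where m: "real (s n) * \<theta> = d n + of_int m"
    using s_mult_minus_d_Ints[of n] by (metis Ints_cases add.commute diff_eq_eq)
  have "lam ^ (M * s n) = exp (\<i> * complex_of_real (2 * pi * real M * (real (s n) * \<theta>)))"
    by (simp flip: exp_eq_lam_power add: ac_simps)
  also have "\<dots> = exp (\<i> * complex_of_real (2 * pi * real M * d n) + \<i> * (of_int (int M * m) * (of_real pi * 2)))"
    unfolding m by (simp add: algebra_simps)
  also have "\<dots> = exp (\<i> * complex_of_real (2 * pi * real M * d n))"
    by (rule exp_plus_2pin)
  finally show ?thesis .
qed

lemma norm_one_minus_lam_power_le: "cmod (1 - lam ^ (M * s n)) \<le> 2 * pi * real M * \<bar>d n\<bar>"
  using norm_one_minus_cis_le[of "2 * pi * real M * d n"]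
  by (simp add: lam_power_mult_s abs_mult)

lemma norm_one_minus_lam_power_le_T: "cmod (1 - lam ^ (M * s n)) \<le> 2 * pi * real M / real (T n)"
proof -
  have "cmod (1 - lam ^ (M * s n)) \<le> 2 * pi * real M * (1 / real (T n))"
    using norm_one_minus_lam_power_le by (rule order.trans) (intro mult_left_mono abs_d_le; simp)
  then show ?thesis
    by simp
qed

text \<open>Since \<open>T n \<ge> 2 ^ ((n + 3) s n)\<close>, division by \<open>T n\<close> beats any growth of the form
  \<open>poly (s n) R ^ s n\<close>.\<close>

definition majorant :: "real \<Rightarrow> nat \<Rightarrow> real" where
  "majorant R n = real (s n + 1) * R ^ (s n + 1) * real (s n) / real (T n)"

lemma majorant_nonneg: "0 \<le> R \<Longrightarrow> 0 \<le> majorant R n"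
  unfolding majorant_def by simp

lemma majorant_le_geometric:
  assumes R: "1 \<le> R" "R \<le> 2 ^ n"
  shows "majorant R n \<le> R * (1 / 2) ^ n"
proof -
  define m where "m = s n"
  have mn: "n \<le> m"
    using s_ge_index by (simp add: m_def)
  have T: "(2 ^ (n + 3)) ^ m \<le> real (T n)"
  proof -
    have "real (2 ^ ((n + 3) * m)) \<le> real (T n)"
      using T_ge_exp[of n] unfolding m_def by (simp only: of_nat_le_iff)
    then show ?thesis
      by (simp add: power_mult)
  qed
  have poly: "real ((m + 1) * m) \<le> 4 ^ m"
    using Suc_mult_self_le_four_power[of m] by (metis of_nat_le_iff of_nat_numeral of_nat_power)
  have "majorant R n = real ((m + 1) * m) * R * R ^ m / real (T n)"
    unfolding majorant_def m_def by (simp add: algebra_simps)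
  also have "\<dots> \<le> 4 ^ m * R * R ^ m / (2 ^ (n + 3)) ^ m"
    using R T poly by (intro frac_le mult_right_mono) auto
  also have "\<dots> = R * (4 * R / 2 ^ (n + 3)) ^ m"
    by (simp add: power_mult_distrib power_divide)
  also have "\<dots> \<le> R * (1 / 2) ^ m"
  proof -
    have "(2::real) ^ (n + 3) = 8 * 2 ^ n"
      by (simp add: power_add)
    then have "4 * R / 2 ^ (n + 3) \<le> 1 / 2"
      using R by (simp add: divide_le_eq)
    then show ?thesis
      using R by (intro mult_left_mono power_mono) auto
  qed
  also have "\<dots> \<le> R * (1 / 2) ^ n"
    using R mn by (intro mult_left_mono power_decreasing) auto
  finally show ?thesis .
qed

lemma summable_majorant:
  assumes "1 \<le> R"
  shows "summable (majorant R)"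
proof (rule summable_comparison_test_ev)
  obtain N where N: "R < 2 ^ N"
    using real_arch_pow[of 2 R] by auto
  show "\<forall>\<^sub>F n in sequentially. norm (majorant R n) \<le> R * (1 / 2) ^ n"
    unfolding eventually_sequentially
  proof (intro exI allI impI)
    fix n
    assume "N \<le> n"
    then have "R \<le> 2 ^ n"
      using N by (meson less_imp_le order.trans one_le_numeral power_increasing)
    then show "norm (majorant R n) \<le> R * (1 / 2) ^ n"
      using majorant_le_geometric majorant_nonneg[of R n] assms by simp
  qed
  show "summable (\<lambda>n. R * (1 / 2 :: real) ^ n)"
    by (intro summable_mult summable_geometric) simp
qed

text \<open>\<open>g\<close> gives the linearisation \<open>\<Psi> (w, z) = (w + g z, z)\<close> on \<open>\<complex> \<times> \<Delta>\<close>, and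
  \<open>lam ^ N (w + G u N z)\<close> is the first coordinate of the \<open>N\<close>-th iterate of \<open>A\<close>.\<close>

definition coef :: "linf \<Rightarrow> nat \<Rightarrow> complex" where
  "coef u n = apply_bcontfun u (s n)"

definition g_term :: "linf \<Rightarrow> complex \<Rightarrow> nat \<Rightarrow> complex" where
  "g_term u z n = coef u n * z ^ (s n + 1)"

definition g'_term :: "linf \<Rightarrow> complex \<Rightarrow> nat \<Rightarrow> complex" where
  "g'_term u z n = coef u n * of_nat (s n + 1) * z ^ s n"

definition G_term :: "linf \<Rightarrow> nat \<Rightarrow> complex \<Rightarrow> nat \<Rightarrow> complex" where
  "G_term u N z n = g_term u z n * (1 - lam ^ (N * s n))"

definition G'_term :: "linf \<Rightarrow> nat \<Rightarrow> complex \<Rightarrow> nat \<Rightarrow> complex" where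
  "G'_term u N z n = g'_term u z n * (1 - lam ^ (N * s n))"

definition g :: "linf \<Rightarrow> complex \<Rightarrow> complex" where
  "g u z = (\<Sum>n. g_term u z n)"

definition g' :: "linf \<Rightarrow> complex \<Rightarrow> complex" where
  "g' u z = (\<Sum>n. g'_term u z n)"

definition G :: "linf \<Rightarrow> nat \<Rightarrow> complex \<Rightarrow> complex" where
  "G u N z = (\<Sum>n. G_term u N z n)"

definition G' :: "linf \<Rightarrow> nat \<Rightarrow> complex \<Rightarrow> complex" where
  "G' u N z = (\<Sum>n. G'_term u N z n)"

lemma norm_coef_le: "cmod (coef u n) \<le> norm u"
  unfolding coef_def by (rule norm_bounded)

lemma g_term_has_field_derivative:
  "((\<lambda>z. g_term u z n) has_field_derivative g'_term u z n) (at z)"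
proof -
  have "((\<lambda>z. z ^ (s n + 1)) has_field_derivative of_nat (s n + 1) * z ^ s n) (at z)"
    using DERIV_power[OF DERIV_ident, of "s n + 1" z] by simp
  then show ?thesis
    unfolding g_term_def g'_term_def by (auto intro: DERIV_cmult simp: mult.assoc)
qed

lemma G_term_has_field_derivative:
  "((\<lambda>z. G_term u N z n) has_field_derivative G'_term u N z n) (at z)"
  unfolding G_term_def G'_term_def by (intro DERIV_cmult_right g_term_has_field_derivative)

lemma norm_G_term_le:
  assumes z: "cmod z \<le> R" and R: "1 \<le> R"
  shows "cmod (G_term u N z n) \<le> norm u * (2 * pi * real N) * majorant R n"
proof -
  have "cmod (G_term u N z n) = cmod (coef u n) * cmod z ^ (s n + 1) * cmod (1 - lam ^ (N * s n))"
    unfolding G_term_def g_term_def by (simp add: norm_mult norm_power)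
  also have "\<dots> \<le> norm u * R ^ (s n + 1) * (2 * pi * real N / real (T n))"
    using z R by (intro mult_mono norm_coef_le power_mono norm_one_minus_lam_power_le_T) auto
  also have "\<dots> = norm u * (2 * pi * real N) * (R ^ (s n + 1) / real (T n))"
    by simp
  also have "\<dots> \<le> norm u * (2 * pi * real N) * majorant R n"
  proof -
    have "R ^ (s n + 1) \<le> real (s n + 1) * R ^ (s n + 1) * real (s n)"
      using R s_ge_1[of n] mult_mono[of 1 "real (s n + 1)" 1 "real (s n)"]
      by (simp add: mult_le_cancel_left1 ac_simps)
    then show ?thesis
      unfolding majorant_def by (intro mult_left_mono divide_right_mono) auto
  qed
  finally show ?thesis .
qed

lemma G_term_dominated:
  "\<exists>d h. 0 < d \<and> summable h \<and> (\<forall>\<^sub>F n in sequentially. \<forall>z\<in>ball y d \<inter> UNIV. norm (G_term u N z n) \<le> h n)"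
proof (intro exI conjI)
  define R where "R = cmod y + 1"
  show "summable (\<lambda>n. norm u * (2 * pi * real N) * majorant R n)"
    by (intro summable_mult summable_majorant) (simp add: R_def)
  show "\<forall>\<^sub>F n in sequentially. \<forall>z\<in>ball y 1 \<inter> UNIV. norm (G_term u N z n) \<le> norm u * (2 * pi * real N) * majorant R n"
  proof (intro always_eventually allI ballI)
    fix n z
    assume "z \<in> ball y 1 \<inter> UNIV"
    then have "cmod z \<le> R"
      unfolding R_def using norm_triangle_sub[of z y] by (simp add: dist_norm norm_minus_commute)
    then show "norm (G_term u N z n) \<le> norm u * (2 * pi * real N) * majorant R n"
      by (rule norm_G_term_le) (simp add: R_def)
  qed
qed simp

lemma summable_G_term: "summable (G_term u N z)"
  using suminf_has_field_derivative(1)[OF open_UNIV UNIV_I G_term_has_field_derivative G_term_dominated] .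

lemma G_has_field_derivative: "(G u N has_field_derivative G' u N z) (at z)"
  using suminf_has_field_derivative(2)[OF open_UNIV UNIV_I G_term_has_field_derivative G_term_dominated]
  unfolding G_def[abs_def] G'_def by simp

lemma g_term_dominated:
  assumes "y \<in> ball 0 1"
  shows "\<exists>d h. 0 < d \<and> summable h \<and> (\<forall>\<^sub>F n in sequentially. \<forall>z\<in>ball y d \<inter> ball 0 1. norm (g_term u z n) \<le> h n)"
proof (intro exI conjI)
  define \<rho> where "\<rho> = (1 + cmod y) / 2"
  have \<rho>: "0 \<le> \<rho>" "\<rho> < 1"
    using assms by (auto simp: \<rho>_def)
  show "0 < (1 - cmod y) / 2"
    using assms by simp
  show "summable (\<lambda>n. norm u * \<rho> ^ n)"
    using \<rho> by (intro summable_mult summable_geometric) auto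
  show "\<forall>\<^sub>F n in sequentially. \<forall>z\<in>ball y ((1 - cmod y) / 2) \<inter> ball 0 1. norm (g_term u z n) \<le> norm u * \<rho> ^ n"
  proof (intro always_eventually allI ballI)
    fix n z
    assume "z \<in> ball y ((1 - cmod y) / 2) \<inter> ball 0 1"
    then have "cmod z \<le> \<rho>"
      unfolding \<rho>_def using norm_triangle_sub[of z y] by (simp add: dist_norm norm_minus_commute)
    then have "norm (g_term u z n) \<le> norm u * \<rho> ^ (s n + 1)"
      unfolding g_term_def norm_mult norm_power by (intro mult_mono norm_coef_le power_mono) auto
    also have "\<dots> \<le> norm u * \<rho> ^ n"
      using \<rho> s_ge_index[of n] by (intro mult_left_mono power_decreasing) auto
    finally show "norm (g_term u z n) \<le> norm u * \<rho> ^ n" .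
  qed
qed

lemma summable_g_term: "cmod z < 1 \<Longrightarrow> summable (g_term u z)"
  using suminf_has_field_derivative(1)[OF open_ball _ g_term_has_field_derivative g_term_dominated] by simp

lemma g_has_field_derivative: "cmod z < 1 \<Longrightarrow> (g u has_field_derivative g' u z) (at z)"
  using suminf_has_field_derivative(2)[OF open_ball _ g_term_has_field_derivative g_term_dominated]
  unfolding g_def[abs_def] g'_def by simp

subsection \<open>Iterates of \<open>A\<close> and the linearisation on \<open>\<complex> \<times> \<Delta>\<close>\<close>

lemma phi_term_mult: "phi_term \<theta> s u z n * z = G_term u 1 z n"
  unfolding phi_term_def G_term_def g_term_def coef_def exp_eq_lam_power
  by (simp add: algebra_simps)

lemma summable_phi_term: "summable (phi_term \<theta> s u z)"
proof (cases "z = 0")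
  case True
  then have "phi_term \<theta> s u z = (\<lambda>n. 0)"
    using s_ge_1 by (auto simp: phi_term_def fun_eq_iff)
  then show ?thesis
    by simp
next
  case False
  then have "phi_term \<theta> s u z = (\<lambda>n. G_term u 1 z n / z)"
    using phi_term_mult by (auto simp: fun_eq_iff field_simps)
  then show ?thesis
    by (simp add: summable_divide summable_G_term)
qed

lemma phi_eq_G: "phi \<theta> s u z = lam * G u 1 z"
proof -
  have "(\<lambda>n. phi_term \<theta> s u z n * z) sums ((\<Sum>n. phi_term \<theta> s u z n) * z)"
    by (intro sums_mult2 summable_sums summable_phi_term)
  then have "G u 1 z = (\<Sum>n. phi_term \<theta> s u z n) * z"
    unfolding phi_term_mult G_def by (simp add: sums_iff)
  then show ?thesis
    unfolding phi_def lam_def[symmetric] by (simp add: ac_simps)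
qed

lemma A_map_eq: "A_map \<theta> s u = (\<lambda>p. (lam * fst p + lam * G u 1 (snd p), lam * snd p))"
  unfolding A_map_def phi_eq_G lam_def by simp

lemma G_shift: "G u 1 (lam ^ N * z) = lam ^ N * (G u (Suc N) z - G u N z)"
proof -
  have "G_term u 1 (lam ^ N * z) n = lam ^ N * (G_term u (Suc N) z n - G_term u N z n)" for n
    unfolding G_term_def g_term_def
    by (simp add: power_mult_distrib power_add algebra_simps flip: power_mult)
  moreover have "(\<lambda>n. lam ^ N * (G_term u (Suc N) z n - G_term u N z n)) sums (lam ^ N * (G u (Suc N) z - G u N z))"
    unfolding G_def by (intro sums_mult sums_diff summable_sums summable_G_term)
  ultimately show ?thesis
    by (simp add: G_def sums_iff)
qed

lemma A_map_iterate:
  "(A_map \<theta> s u ^^ N) p = (lam ^ N * fst p + lam ^ N * G u N (snd p), lam ^ N * snd p)"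
proof (induction N)
  case 0
  then show ?case
    by (simp add: G_def G_term_def)
next
  case (Suc N)
  have "(A_map \<theta> s u ^^ Suc N) p = A_map \<theta> s u ((A_map \<theta> s u ^^ N) p)"
    by simp
  also have "\<dots> = (lam * (lam ^ N * fst p + lam ^ N * G u N (snd p)) + lam * G u 1 (lam ^ N * snd p),
      lam * (lam ^ N * snd p))"
    unfolding Suc.IH by (simp add: A_map_eq)
  also have "\<dots> = (lam ^ Suc N * fst p + lam ^ Suc N * G u (Suc N) (snd p), lam ^ Suc N * snd p)"
    unfolding G_shift by (simp add: algebra_simps)
  finally show ?case .
qed

lemma holo_aut_A_map: "holo_aut_C2 (A_map \<theta> s u)"
proof -
  define B where "B p = (inverse lam * fst p + - G u 1 (inverse lam * snd p), inverse lam * snd p)" for p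
  have "holo2_on (A_map \<theta> s u) UNIV"
    unfolding A_map_eq by (rule holo2_on_shear) (auto intro: DERIV_cmult G_has_field_derivative)
  moreover have "holo2_on B UNIV"
    unfolding B_def[abs_def]
    by (rule holo2_on_shear)
       (auto intro!: DERIV_minus DERIV_chain2[OF G_has_field_derivative] DERIV_cmult_Id)
  moreover have "B (A_map \<theta> s u p) = p" "A_map \<theta> s u (B p) = p" for p
    by (simp_all add: A_map_eq B_def algebra_simps flip: mult.assoc)
  ultimately show ?thesis
    unfolding holo_aut_C2_def biholo2_on_def by blast
qed

lemma A_map_image_disc: "A_map \<theta> s u ` (UNIV \<times> unit_disc) = UNIV \<times> unit_disc"
proof
  show "A_map \<theta> s u ` (UNIV \<times> unit_disc) \<subseteq> UNIV \<times> unit_disc"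
    by (auto simp: A_map_eq unit_disc_def norm_mult)
  show "UNIV \<times> unit_disc \<subseteq> A_map \<theta> s u ` (UNIV \<times> unit_disc)"
  proof
    fix p :: "complex \<times> complex"
    assume "p \<in> UNIV \<times> unit_disc"
    then have "(inverse lam * fst p - G u 1 (inverse lam * snd p), inverse lam * snd p) \<in> UNIV \<times> unit_disc"
      by (auto simp: unit_disc_def norm_mult norm_inverse)
    moreover have "p = A_map \<theta> s u (inverse lam * fst p - G u 1 (inverse lam * snd p), inverse lam * snd p)"
      by (simp add: A_map_eq algebra_simps flip: mult.assoc)
    ultimately show "p \<in> A_map \<theta> s u ` (UNIV \<times> unit_disc)"
      by blast
  qed
qed

lemma g_functional_equation:
  assumes "cmod z < 1"
  shows "lam * G u 1 z + g u (lam * z) = lam * g u z"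
proof -
  have "(\<lambda>n. lam * g_term u z n - g_term u (lam * z) n) sums (lam * g u z - g u (lam * z))"
    unfolding g_def using assms by (intro sums_diff sums_mult summable_sums summable_g_term) (auto simp: norm_mult)
  moreover have "(\<lambda>n. lam * g_term u z n - g_term u (lam * z) n) = (\<lambda>n. lam * G_term u 1 z n)"
    by (simp add: fun_eq_iff g_term_def G_term_def power_mult_distrib algebra_simps)
  moreover have "(\<lambda>n. lam * G_term u 1 z n) sums (lam * G u 1 z)"
    unfolding G_def by (intro sums_mult summable_sums summable_G_term)
  ultimately show ?thesis
    by (metis sums_unique2 diff_eq_eq add.commute)
qed

definition Psi :: "linf \<Rightarrow> complex \<times> complex \<Rightarrow> complex \<times> complex" where
  "Psi u p = (fst p + g u (snd p), snd p)"

lemma biholo2_on_Psi: "biholo2_on (Psi u) (UNIV \<times> unit_disc)"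
proof -
  have U: "open (UNIV \<times> unit_disc)"
    unfolding unit_disc_def by (intro open_Times) auto
  define Q where "Q p = (1 * fst p + - g u (snd p), 1 * snd p)" for p
  have "holo2_on (\<lambda>p. (1 * fst p + g u (snd p), 1 * snd p)) (UNIV \<times> unit_disc)"
    using U by (rule holo2_on_shear) (auto simp: unit_disc_def intro!: g_has_field_derivative)
  then have "holo2_on (Psi u) (UNIV \<times> unit_disc)"
    by (simp add: Psi_def[abs_def])
  moreover have "holo2_on Q (UNIV \<times> unit_disc)"
    unfolding Q_def[abs_def] using U
    by (rule holo2_on_shear[where f' = "\<lambda>x. - g' u (snd x)"]) (auto simp: unit_disc_def intro!: DERIV_minus g_has_field_derivative)
  ultimately show ?thesis
    unfolding biholo2_on_def by (intro conjI exI[of _ Q]) (auto simp: Psi_def Q_def)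
qed

lemma Psi_conjugates_A_map:
  assumes "p \<in> UNIV \<times> unit_disc"
  shows "Psi u (A_map \<theta> s u p) = rot2 \<theta> (Psi u p)"
proof -
  have "cmod (snd p) < 1"
    using assms by (auto simp: unit_disc_def)
  then show ?thesis
    using g_functional_equation[of "snd p" u] unfolding rot2_def lam_def[symmetric]
    by (simp add: Psi_def A_map_eq algebra_simps)
qed

subsection \<open>Recurrence\<close>

lemma lam_power_s_tendsto_1: "(\<lambda>j. lam ^ s j) \<longlonglongrightarrow> 1"
proof -
  have "(\<lambda>j. exp (\<i> * complex_of_real (2 * pi * real 1 * d j))) \<longlonglongrightarrow> exp (\<i> * complex_of_real (2 * pi * real 1 * 0))"
    by (intro tendsto_intros d_tendsto_0)
  then show ?thesis
    using lam_power_mult_s[of 1] by simp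
qed

lemma norm_one_minus_lam_power_s_s_le: "cmod (1 - lam ^ (s j * s k)) \<le> 2 * pi * real (s k) / real (T k)"
proof (cases "k < j")
  case True
  have "cmod (1 - lam ^ (s k * s j)) \<le> 2 * pi * real (s k) / real (T j)"
    by (rule norm_one_minus_lam_power_le_T)
  also have "\<dots> \<le> 2 * pi * real (s k) / real (T k)"
    using T_mono[of k j] True T_pos[of k] by (intro divide_left_mono) auto
  finally show ?thesis
    by (simp add: mult.commute)
next
  case False
  have "cmod (1 - lam ^ (s j * s k)) \<le> 2 * pi * real (s j) / real (T k)"
    by (rule norm_one_minus_lam_power_le_T)
  also have "\<dots> \<le> 2 * pi * real (s k) / real (T k)"
    using s_mono[of j k] False by (intro divide_right_mono) auto
  finally show ?thesis .
qed

text \<open>By Tannery's theorem: every term of \<open>G u (s j) z\<close> tends to \<open>0\<close>, under a majorant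
  independent of \<open>j\<close>.\<close>

lemma G_s_tendsto_0: "(\<lambda>j. G u (s j) z) \<longlonglongrightarrow> 0"
proof -
  define R where "R = max 1 (cmod z)"
  have R: "1 \<le> R" "cmod z \<le> R"
    by (auto simp: R_def)
  have norm_term: "norm (G_term u (s j) z k) \<le> norm u * R ^ (s k + 1) * cmod (1 - lam ^ (s j * s k))" for j k
    unfolding G_term_def g_term_def norm_mult norm_power
    using R by (intro mult_mono mult_right_mono norm_coef_le power_mono) auto
  have "(\<lambda>j. \<Sum>k. G_term u (s j) z k) \<longlonglongrightarrow> (\<Sum>k. 0)"
  proof (rule tannerys_theorem[where M = "\<lambda>k. norm u * (2 * pi) * majorant R k", THEN conjunct2, THEN conjunct2])
    fix k
    show "(\<lambda>j. G_term u (s j) z k) \<longlonglongrightarrow> 0"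
    proof (rule Lim_null_comparison)
      show "\<forall>\<^sub>F j in sequentially. norm (G_term u (s j) z k) \<le> norm u * R ^ (s k + 1) * (2 * pi * real (s k) * \<bar>d j\<bar>)"
        using R norm_term norm_one_minus_lam_power_le[of "s k"]
        by (intro always_eventually allI order.trans[OF norm_term] mult_left_mono) (auto simp: mult.commute)
      show "(\<lambda>j. norm u * R ^ (s k + 1) * (2 * pi * real (s k) * \<bar>d j\<bar>)) \<longlonglongrightarrow> 0"
        using tendsto_mult[OF tendsto_const tendsto_mult[OF tendsto_const tendsto_rabs[OF d_tendsto_0]],
            of "norm u * R ^ (s k + 1)" "2 * pi * real (s k)"]
        by simp
    qed
  next
    show "\<forall>\<^sub>F (k, j) in at_top \<times>\<^sub>F sequentially. norm (G_term u (s j) z k) \<le> norm u * (2 * pi) * majorant R k"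
    proof (intro always_eventually allI, clarify)
      fix k j
      have "norm (G_term u (s j) z k) \<le> norm u * R ^ (s k + 1) * (2 * pi * real (s k) / real (T k))"
        using R by (intro order.trans[OF norm_term] mult_left_mono norm_one_minus_lam_power_s_s_le) auto
      also have "\<dots> = norm u * (2 * pi) * (R ^ (s k + 1) * real (s k) / real (T k))"
        by simp
      also have "\<dots> \<le> norm u * (2 * pi) * majorant R k"
      proof -
        have "R ^ (s k + 1) * real (s k) \<le> real (s k + 1) * R ^ (s k + 1) * real (s k)"
          using R by (intro mult_right_mono) auto
        then show ?thesis
          unfolding majorant_def by (intro mult_left_mono divide_right_mono) auto
      qed
      finally show "norm (G_term u (s j) z k) \<le> norm u * (2 * pi) * majorant R k" .
    qed
    show "summable (\<lambda>k. norm u * (2 * pi) * majorant R k)"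
      by (intro summable_mult summable_majorant R)
  qed simp
  then show ?thesis
    by (simp add: G_def)
qed

lemma A_map_iterate_s_tendsto: "(\<lambda>j. (A_map \<theta> s u ^^ s j) p) \<longlonglongrightarrow> p"
proof -
  have "(\<lambda>j. (lam ^ s j * fst p + lam ^ s j * G u (s j) (snd p), lam ^ s j * snd p)) \<longlonglongrightarrow>
      (1 * fst p + 1 * 0, 1 * snd p)"
    by (intro tendsto_intros lam_power_s_tendsto_1 G_s_tendsto_0)
  then show ?thesis
    by (simp add: A_map_iterate)
qed

lemma A_map_recurrent:
  assumes "\<epsilon> > 0"
  shows "\<exists>\<^sub>F N in sequentially. norm ((A_map \<theta> s u ^^ N) p - p) < \<epsilon>"
proof -
  have "\<forall>\<^sub>F j in sequentially. norm ((A_map \<theta> s u ^^ s j) p - p) < \<epsilon>"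
    using A_map_iterate_s_tendsto[of u p] assms by (simp add: tendsto_iff dist_norm)
  then obtain J where J: "\<And>j. J \<le> j \<Longrightarrow> norm ((A_map \<theta> s u ^^ s j) p - p) < \<epsilon>"
    unfolding eventually_sequentially by blast
  show ?thesis
    unfolding frequently_sequentially
  proof
    fix M
    have "M \<le> s (max J M)"
      using s_ge_index[of "max J M"] by simp
    then show "\<exists>N\<ge>M. norm ((A_map \<theta> s u ^^ N) p - p) < \<epsilon>"
      using J[of "max J M"] by auto
  qed
qed

subsection \<open>Resonant times\<close>

text \<open>The resonant time \<open>N_j = t_j s_j\<close>, \<open>t_j = \<lceil>1 / (4 \<bar>d_j\<bar> s_j)\<rceil>\<close>, puts \<open>N_j s_j d_j\<close> into
  \<open>[1/4, 1/2]\<close>: then \<open>lam ^ (N_j s_j)\<close> stays away from \<open>1\<close>, while \<open>lam ^ (N_j s_n)\<close> is close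
  to \<open>1\<close> for \<open>n \<noteq> j\<close>.\<close>

definition resonance_mult :: "nat \<Rightarrow> nat" where
  "resonance_mult j = nat \<lceil>1 / (4 * \<bar>d j\<bar> * real (s j))\<rceil>"

definition resonant_time :: "nat \<Rightarrow> nat" where
  "resonant_time j = resonance_mult j * s j"

lemma resonance_mult_bounds:
  "1 / (4 * \<bar>d j\<bar> * real (s j)) \<le> real (resonance_mult j)"
  "real (resonance_mult j) \<le> 1 / (4 * \<bar>d j\<bar> * real (s j)) + 1"
proof -
  define y where "y = 1 / (4 * \<bar>d j\<bar> * real (s j))"
  have "0 < y"
    unfolding y_def using abs_d_pos[of j] s_ge_1[of j] by simp
  then have "real (resonance_mult j) = of_int \<lceil>y\<rceil>"
    unfolding resonance_mult_def y_def[symmetric] by simp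
  then show "y \<le> real (resonance_mult j)" "real (resonance_mult j) \<le> y + 1"
    using ceiling_correct[of y] by linarith+
qed

lemma resonant_phase_bounds:
  "1 / 4 \<le> real (resonance_mult j) * real (s j) * \<bar>d j\<bar>"
  "real (resonance_mult j) * real (s j) * \<bar>d j\<bar> \<le> 1 / 2"
proof -
  have nz: "real (s j) \<noteq> 0" "d j \<noteq> 0"
    using s_ge_1[of j] abs_d_pos[of j] by auto
  then have sd: "0 < real (s j) * \<bar>d j\<bar>"
    by simp
  have "1 / 4 = 1 / (4 * \<bar>d j\<bar> * real (s j)) * (real (s j) * \<bar>d j\<bar>)"
    using nz by (simp add: field_simps)
  also have "\<dots> \<le> real (resonance_mult j) * (real (s j) * \<bar>d j\<bar>)"
    using resonance_mult_bounds(1)[of j] sd by (intro mult_right_mono) auto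
  finally show "1 / 4 \<le> real (resonance_mult j) * real (s j) * \<bar>d j\<bar>"
    by (simp add: mult.assoc)
  have "real (resonance_mult j) * (real (s j) * \<bar>d j\<bar>) \<le>
      (1 / (4 * \<bar>d j\<bar> * real (s j)) + 1) * (real (s j) * \<bar>d j\<bar>)"
    using resonance_mult_bounds(2)[of j] sd by (intro mult_right_mono) auto
  also have "\<dots> = 1 / 4 + real (s j) * \<bar>d j\<bar>"
    using nz by (simp add: field_simps)
  also have "\<dots> \<le> 1 / 2"
    using s_abs_d_le[of j] by simp
  finally show "real (resonance_mult j) * real (s j) * \<bar>d j\<bar> \<le> 1 / 2"
    by (simp add: mult.assoc)
qed

lemma norm_one_minus_lam_power_resonant_ge: "1 \<le> cmod (1 - lam ^ (resonant_time j * s j))"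
proof -
  define y where "y = 2 * pi * real (resonance_mult j * s j) * d j"
  have y: "\<bar>y\<bar> = 2 * pi * (real (resonance_mult j) * real (s j) * \<bar>d j\<bar>)"
    unfolding y_def by (simp add: abs_mult)
  have "pi / 2 \<le> \<bar>y\<bar>" "\<bar>y\<bar> \<le> pi"
    unfolding y using resonant_phase_bounds[of j] by auto
  then have "cos \<bar>y\<bar> \<le> cos (pi / 2)"
    by (intro cos_monotone_0_pi_le) auto
  then have "cos y \<le> 0"
    by simp
  then show ?thesis
    unfolding resonant_time_def lam_power_mult_s y_def[symmetric] by (rule norm_one_minus_cis_ge)
qed

lemma norm_one_minus_lam_power_off_resonant_le:
  assumes "n \<noteq> j"
  shows "cmod (1 - lam ^ (resonant_time j * s n)) \<le> 4 * pi * real (s n) / real (T n)"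
proof (cases "n < j")
  case True
  have nz: "real (s j) \<noteq> 0" "d j \<noteq> 0"
    using s_ge_1[of j] abs_d_pos[of j] by auto
  have "real (T n) \<le> 4 * real (s j)"
    using T_le_s[OF True] by simp
  then have b1: "1 / (4 * real (s j)) \<le> 1 / real (T n)"
    using T_pos[of n] by (intro divide_left_mono) auto
  have "1 / real (T j) \<le> 1 / real (T n)"
    using T_mono[of n j] True T_pos[of n] by (intro divide_left_mono) auto
  then have b2: "\<bar>d j\<bar> \<le> 1 / real (T n)"
    using abs_d_le[of j] by linarith
  have "cmod (1 - lam ^ (resonant_time j * s n)) = cmod (1 - lam ^ ((resonance_mult j * s n) * s j))"
    unfolding resonant_time_def by (simp add: ac_simps)
  also have "\<dots> \<le> 2 * pi * real (s n) * (real (resonance_mult j) * \<bar>d j\<bar>)"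
    using norm_one_minus_lam_power_le[of "resonance_mult j * s n" j] by (simp add: ac_simps)
  also have "\<dots> \<le> 2 * pi * real (s n) * ((1 / (4 * \<bar>d j\<bar> * real (s j)) + 1) * \<bar>d j\<bar>)"
    using resonance_mult_bounds(2)[of j] by (intro mult_left_mono mult_right_mono) auto
  also have "\<dots> = 2 * pi * real (s n) * (1 / (4 * real (s j)) + \<bar>d j\<bar>)"
    using nz by (simp add: field_simps)
  also have "\<dots> \<le> 2 * pi * real (s n) * (1 / real (T n) + 1 / real (T n))"
    using b1 b2 by (intro mult_left_mono add_mono) auto
  finally show ?thesis
    by simp
next
  case False
  then have "j < n"
    using assms by simp
  have "real (resonant_time j) \<le> (1 / (4 * \<bar>d j\<bar> * real (s j)) + 1) * real (s j)"
    unfolding resonant_time_def using resonance_mult_bounds(2)[of j] by (simp add: mult_right_mono)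
  also have "\<dots> = 1 / (4 * \<bar>d j\<bar>) + real (s j)"
    using s_ge_1[of j] abs_d_pos[of j] by (simp add: field_simps)
  also have "\<dots> \<le> real (T j) / 2 + real (T j)"
    using abs_d_ge[of j] abs_d_pos[of j] T_pos[of j] s_le_T[of j]
    by (intro add_mono) (simp_all add: field_simps)
  also have "\<dots> \<le> 2 * real (s n)"
    using T_le_s[OF \<open>j < n\<close>] by simp
  finally have "2 * pi * real (resonant_time j) / real (T n) \<le> 2 * pi * (2 * real (s n)) / real (T n)"
    by (intro divide_right_mono mult_left_mono) auto
  with norm_one_minus_lam_power_le_T[of "resonant_time j" n] show ?thesis
    by simp
qed

subsection \<open>Unbounded orbits and derivatives\<close>

text \<open>At the resonant time \<open>N_j\<close> the \<open>j\<close>-th term dominates: all other terms together are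
  bounded independently of \<open>j\<close>.\<close>

lemma norm_resonant_sum_ge:
  fixes a :: "nat \<Rightarrow> complex"
  assumes R: "1 \<le> R" and a: "\<And>n. cmod (a n) \<le> real (s n + 1) * R ^ (s n + 1)"
  shows "cmod (coef u j) * cmod (a j) - 4 * pi * norm u * (\<Sum>n. majorant R n)
      \<le> cmod (\<Sum>n. coef u n * a n * (1 - lam ^ (resonant_time j * s n)))"
proof -
  define F where "F n = coef u n * a n * (1 - lam ^ (resonant_time j * s n))" for n
  define F' where "F' n = (if n = j then 0 else F n)" for n
  define M where "M n = 4 * pi * norm u * majorant R n" for n
  have summable_M: "summable M"
    unfolding M_def by (intro summable_mult summable_majorant R)
  have F'_le: "norm (F' n) \<le> M n" for n
  proof (cases "n = j")
    case True
    then show ?thesis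
      unfolding F'_def M_def using majorant_nonneg[of R n] R by simp
  next
    case False
    have "norm (F' n) = cmod (coef u n) * cmod (a n) * cmod (1 - lam ^ (resonant_time j * s n))"
      using False by (simp add: F'_def F_def norm_mult)
    also have "\<dots> \<le> norm u * (real (s n + 1) * R ^ (s n + 1)) * (4 * pi * real (s n) / real (T n))"
      using R by (intro mult_mono norm_coef_le a norm_one_minus_lam_power_off_resonant_le[OF False]) auto
    also have "\<dots> = M n"
      unfolding M_def majorant_def by (simp add: algebra_simps add_divide_distrib)
    finally show ?thesis .
  qed
  have summable_F': "summable (\<lambda>n. norm (F' n))"
    by (rule summable_comparison_test[OF _ summable_M]) (use F'_le in auto)
  have "(\<lambda>n. (if n = j then F n else 0) + F' n) sums (F j + (\<Sum>n. F' n))"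
    by (intro sums_add sums_single summable_sums summable_norm_cancel[OF summable_F'])
  moreover have "(\<lambda>n. (if n = j then F n else 0) + F' n) = F"
    by (auto simp: F'_def fun_eq_iff)
  ultimately have sum_F: "(\<Sum>n. F n) = F j + (\<Sum>n. F' n)"
    by (metis sums_unique)
  have "norm (\<Sum>n. F' n) \<le> (\<Sum>n. M n)"
    using summable_norm[OF summable_F'] suminf_le[OF F'_le summable_F' summable_M] by linarith
  also have "\<dots> = 4 * pi * norm u * (\<Sum>n. majorant R n)"
    unfolding M_def by (rule suminf_mult[OF summable_majorant[OF R]])
  finally have "norm (\<Sum>n. F' n) \<le> 4 * pi * norm u * (\<Sum>n. majorant R n)" .
  moreover have "cmod (coef u j) * cmod (a j) \<le> norm (F j)"
    using mult_left_mono[OF norm_one_minus_lam_power_resonant_ge[of j], of "cmod (coef u j) * cmod (a j)"]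
    by (simp add: F_def norm_mult)
  moreover have "norm (F j) - norm (\<Sum>n. F' n) \<le> norm (\<Sum>n. F n)"
    unfolding sum_F by (rule norm_diff_ineq)
  ultimately show ?thesis
    unfolding F_def by linarith
qed

lemma norm_G_resonant_ge:
  assumes z: "1 \<le> cmod z"
  shows "cmod (coef u j) * cmod z ^ s j - 4 * pi * norm u * (\<Sum>n. majorant (cmod z) n)
      \<le> cmod (G u (resonant_time j) z)"
proof -
  have "cmod (z ^ (s n + 1)) \<le> real (s n + 1) * cmod z ^ (s n + 1)" for n
    using mult_right_mono[of 1 "real (s n + 1)" "cmod z ^ (s n + 1)"] by (simp only: norm_power) simp
  from norm_resonant_sum_ge[OF z this]
  have "cmod (coef u j) * cmod (z ^ (s j + 1)) - 4 * pi * norm u * (\<Sum>n. majorant (cmod z) n)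
      \<le> cmod (G u (resonant_time j) z)"
    unfolding G_def G_term_def g_term_def .
  moreover have "cmod z ^ s j \<le> cmod (z ^ (s j + 1))"
    using z power_increasing[of "s j" "s j + 1" "cmod z"] by (simp only: norm_power)
  then have "cmod (coef u j) * cmod z ^ s j \<le> cmod (coef u j) * cmod (z ^ (s j + 1))"
    by (rule mult_left_mono) simp
  ultimately show ?thesis
    by linarith
qed

lemma norm_G'_resonant_ge:
  assumes z: "1 \<le> cmod z"
  shows "cmod (coef u j) * cmod z ^ s j - 4 * pi * norm u * (\<Sum>n. majorant (cmod z) n)
      \<le> cmod (G' u (resonant_time j) z)"
proof -
  have "cmod (of_nat (s n + 1) * z ^ s n) \<le> real (s n + 1) * cmod z ^ (s n + 1)" for n
  proof -
    have "real (s n + 1) * cmod z ^ s n \<le> real (s n + 1) * cmod z ^ (s n + 1)"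
      using z by (intro mult_left_mono power_increasing) auto
    then show ?thesis
      by (simp only: norm_mult norm_power norm_of_nat)
  qed
  from norm_resonant_sum_ge[OF z this]
  have "cmod (coef u j) * cmod (of_nat (s j + 1) * z ^ s j) - 4 * pi * norm u * (\<Sum>n. majorant (cmod z) n)
      \<le> cmod (G' u (resonant_time j) z)"
    unfolding G'_def G'_term_def g'_term_def by (simp add: mult.assoc)
  moreover have "cmod z ^ s j \<le> cmod (of_nat (s j + 1) * z ^ s j)"
  proof -
    have "1 * cmod z ^ s j \<le> real (s j + 1) * cmod z ^ s j"
      by (intro mult_right_mono) auto
    then show ?thesis
      by (simp only: norm_mult norm_power norm_of_nat mult_1_left)
  qed
  then have "cmod (coef u j) * cmod z ^ s j \<le> cmod (coef u j) * cmod (of_nat (s j + 1) * z ^ s j)"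
    by (rule mult_left_mono) simp
  ultimately show ?thesis
    by linarith
qed

lemma exists_gt_of_frequently_large_coef:
  fixes f :: "nat \<Rightarrow> real"
  assumes R: "1 < R" and \<delta>: "0 < \<delta>" and frequent: "\<exists>\<^sub>F j in sequentially. \<delta> \<le> cmod (coef u j)"
    and f: "\<And>j. cmod (coef u j) * R ^ s j - K \<le> f j"
  shows "\<exists>j. B < f j"
proof -
  obtain n0 where n0: "(B + K) / \<delta> < R ^ n0"
    using real_arch_pow[OF R] by blast
  obtain j where j: "n0 \<le> j" "\<delta> \<le> cmod (coef u j)"
    using frequent unfolding frequently_sequentially by blast
  have "R ^ n0 \<le> R ^ s j"
    using R j(1) s_ge_index[of j] by (intro power_increasing) auto
  have "B + K < \<delta> * R ^ n0"
    using n0 \<delta> by (simp add: pos_divide_less_eq mult.commute)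
  also have "\<dots> \<le> \<delta> * R ^ s j"
    using \<open>R ^ n0 \<le> R ^ s j\<close> \<delta> by simp
  also have "\<dots> \<le> cmod (coef u j) * R ^ s j"
    using j(2) R by (simp add: mult_right_mono)
  finally show ?thesis
    using f[of j] by (intro exI[of _ j]) linarith
qed

lemma A_map_orbit_unbounded:
  assumes \<delta>: "0 < \<delta>" and frequent: "\<exists>\<^sub>F j in sequentially. \<delta> \<le> cmod (coef u j)"
    and z: "1 < cmod (snd p)"
  shows "\<not> bounded (range (\<lambda>N. (A_map \<theta> s u ^^ N) p))"
proof
  assume "bounded (range (\<lambda>N. (A_map \<theta> s u ^^ N) p))"
  then obtain B where B: "\<And>N. norm ((A_map \<theta> s u ^^ N) p) \<le> B"
    unfolding bounded_iff by auto
  define K where "K = 4 * pi * norm u * (\<Sum>n. majorant (cmod (snd p)) n) + cmod (fst p)"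
  have "\<exists>j. B < norm ((A_map \<theta> s u ^^ resonant_time j) p)"
  proof (rule exists_gt_of_frequently_large_coef[OF z \<delta> frequent])
    fix j
    define N where "N = resonant_time j"
    have "cmod (G u N (snd p) + fst p) = cmod (lam ^ N * fst p + lam ^ N * G u N (snd p))"
      by (simp add: distrib_left[symmetric] norm_mult add.commute)
    also have "\<dots> \<le> norm ((A_map \<theta> s u ^^ N) p)"
      unfolding A_map_iterate by (rule norm_fst_le)
    finally show "cmod (coef u j) * cmod (snd p) ^ s j - K \<le> norm ((A_map \<theta> s u ^^ resonant_time j) p)"
      using norm_G_resonant_ge[of "snd p" u j] z norm_diff_ineq[of "G u N (snd p)" "fst p"]
      unfolding K_def N_def by auto
  qed
  then show False
    using B by (meson not_le)
qed

lemma norm_G'_le_onorm_derivative: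
  "cmod (G' u N (snd p)) \<le> onorm (frechet_derivative (A_map \<theta> s u ^^ N) (at p))"
proof -
  define D where "D v = (lam ^ N * fst v + lam ^ N * G' u N (snd p) * snd v, lam ^ N * snd v)" for v
  have "(A_map \<theta> s u ^^ N) = (\<lambda>q. (lam ^ N * fst q + (\<lambda>z. lam ^ N * G u N z) (snd q), lam ^ N * snd q))"
    by (simp add: fun_eq_iff A_map_iterate)
  then have deriv: "((A_map \<theta> s u ^^ N) has_derivative D) (at p)"
    unfolding D_def[abs_def] by (simp only:) (intro has_derivative_shear DERIV_cmult G_has_field_derivative)
  have "cmod (G' u N (snd p)) = cmod (lam ^ N * G' u N (snd p))"
    by (simp add: norm_mult)
  also have "\<dots> \<le> norm (D (0, 1))"
    unfolding D_def by (simp add: norm_fst_le)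
  also have "\<dots> \<le> onorm D * norm (0::complex, 1::complex)"
    by (rule onorm[OF has_derivative_bounded_linear[OF deriv]])
  finally show ?thesis
    using frechet_derivative_at[OF deriv] by (simp add: norm_Pair)
qed

lemma A_map_derivative_unbounded:
  assumes \<delta>: "0 < \<delta>" and frequent: "\<exists>\<^sub>F j in sequentially. \<delta> \<le> cmod (coef u j)"
    and z: "1 < cmod (snd p)"
  shows "\<not> bounded (range (\<lambda>N. onorm (frechet_derivative (A_map \<theta> s u ^^ N) (at p))))"
proof
  assume "bounded (range (\<lambda>N. onorm (frechet_derivative (A_map \<theta> s u ^^ N) (at p))))"
  then obtain B where B: "\<And>N. onorm (frechet_derivative (A_map \<theta> s u ^^ N) (at p)) \<le> B"
    unfolding bounded_iff real_norm_def by (meson abs_le_D1 rangeI)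
  have "\<exists>j. B < onorm (frechet_derivative (A_map \<theta> s u ^^ resonant_time j) (at p))"
  proof (rule exists_gt_of_frequently_large_coef[OF z \<delta> frequent])
    fix j
    show "cmod (coef u j) * cmod (snd p) ^ s j - 4 * pi * norm u * (\<Sum>n. majorant (cmod (snd p)) n)
        \<le> onorm (frechet_derivative (A_map \<theta> s u ^^ resonant_time j) (at p))"
      using norm_G'_resonant_ge[of "snd p" u j] norm_G'_le_onorm_derivative[of u "resonant_time j" p] z
      by linarith
  qed
  then show False
    using B by (meson not_le)
qed

subsection \<open>The residual set \<open>E2\<close>\<close>

definition E2 :: "linf set" where
  "E2 = {u. \<exists>\<delta>>0. \<exists>\<^sub>F j in sequentially. \<delta> \<le> cmod (coef u j)}"

lemma open_E2: "open E2"
  unfolding open_contains_ball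
proof
  fix u
  assume "u \<in> E2"
  then obtain \<delta> where \<delta>: "\<delta> > 0" and frequent: "\<exists>\<^sub>F j in sequentially. \<delta> \<le> cmod (coef u j)"
    unfolding E2_def by auto
  have "v \<in> E2" if "dist u v < \<delta> / 2" for v
  proof -
    have "\<exists>\<^sub>F j in sequentially. \<delta> / 2 \<le> cmod (coef v j)"
      using frequent
    proof (rule frequently_elim1)
      fix j
      assume "\<delta> \<le> cmod (coef u j)"
      moreover have "cmod (coef u j) \<le> cmod (coef v j) + dist u v"
        using dist_bounded[of u "s j" v] norm_triangle_sub[of "coef u j" "coef v j"]
        unfolding coef_def dist_norm by linarith
      ultimately show "\<delta> / 2 \<le> cmod (coef v j)"
        using that by linarith
    qed
    then show ?thesis
      unfolding E2_def using \<delta> by (intro CollectI exI[of _ "\<delta> / 2"]) auto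
  qed
  then show "\<exists>\<epsilon>>0. ball u \<epsilon> \<subseteq> E2"
    using \<delta> by (intro exI[of _ "\<delta> / 2"]) auto
qed

text \<open>Density: raise every entry of modulus \<open>< \<epsilon>/4\<close> to \<open>\<epsilon>/4\<close>.\<close>

lemma closure_E2: "closure E2 = UNIV"
proof -
  have "u \<in> closure E2" for u
    unfolding closure_approachable
  proof (intro allI impI)
    fix \<epsilon> :: real
    assume \<epsilon>: "\<epsilon> > 0"
    define f where "f m = (if cmod (apply_bcontfun u m) < \<epsilon> / 4 then complex_of_real (\<epsilon> / 4) else apply_bcontfun u m)" for m
    have "f \<in> bcontfun"
    proof (rule bcontfun_normI)
      show "continuous_on UNIV f"
        by simp
      show "norm (f m) \<le> \<epsilon> / 4 + norm u" for m
        unfolding f_def using norm_bounded[of u m] \<epsilon> by auto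
    qed
    then obtain v where v: "f = apply_bcontfun v"
      by (rule bcontfunE)
    have "\<epsilon> / 4 \<le> cmod (coef v j)" for j
      unfolding coef_def v[symmetric] f_def using \<epsilon> by auto
    then have "v \<in> E2"
      unfolding E2_def using \<epsilon> by (auto intro!: exI[of _ "\<epsilon> / 4"] eventually_frequently always_eventually)
    moreover have "dist v u \<le> \<epsilon> / 2"
    proof (rule dist_bound)
      fix m
      show "dist (apply_bcontfun v m) (apply_bcontfun u m) \<le> \<epsilon> / 2"
      proof (cases "cmod (apply_bcontfun u m) < \<epsilon> / 4")
        case True
        then have "dist (apply_bcontfun v m) (apply_bcontfun u m) = cmod (complex_of_real (\<epsilon> / 4) - apply_bcontfun u m)"
          by (simp add: v[symmetric] f_def dist_norm)
        also have "\<dots> \<le> cmod (complex_of_real (\<epsilon> / 4)) + cmod (apply_bcontfun u m)"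
          by (rule norm_triangle_ineq4)
        also have "\<dots> \<le> \<epsilon> / 2"
          using True \<epsilon> by simp
        finally show ?thesis .
      next
        case False
        then show ?thesis
          using \<epsilon> by (simp add: v[symmetric] f_def)
      qed
    qed
    ultimately show "\<exists>v\<in>E2. dist v u < \<epsilon>"
      using \<epsilon> by force
  qed
  then show ?thesis
    by auto
qed

end

lemma lacunary_denominators_cf_subsequence:
  assumes irr: "\<theta> \<notin> \<rat>"
    and growth: "filterlim (\<lambda>n. ln (real (cf_q \<theta> (Suc n))) / real (cf_q \<theta> n)) at_top sequentially"
  obtains k where "strict_mono k"
    and "lacunary_denominators \<theta> (\<lambda>n. cf_q \<theta> (k n)) (\<lambda>n. cf_q \<theta> (Suc (k n))) (\<lambda>n. cf_err \<theta> (Suc (k n)))"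
proof -
  obtain k where k: "strict_mono k"
    and big: "\<And>n. 2 ^ ((n + 3) * cf_q \<theta> (k n)) \<le> cf_q \<theta> (Suc (k n))"
    and le: "\<And>n. cf_q \<theta> (Suc (k n)) \<le> cf_q \<theta> (k (Suc n))"
    using lacunary_cf_subsequence[OF irr growth] by blast
  have "lacunary_denominators \<theta> (\<lambda>n. cf_q \<theta> (k n)) (\<lambda>n. cf_q \<theta> (Suc (k n))) (\<lambda>n. cf_err \<theta> (Suc (k n)))"
    using cf_q_pos[OF irr] big le cf_err_bounds[OF irr]
    by unfold_locales (auto simp: Suc_le_eq)
  with k that show ?thesis
    by blast
qed

theorem theorem1:
  fixes \<theta> :: real and S :: "(complex \<times> complex) set"
  assumes irr: "\<theta> \<notin> \<rat>"
    and growth: "filterlim (\<lambda>n. ln (real (cf_q \<theta> (Suc n))) / real (cf_q \<theta> n)) at_top sequentially"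
    and S_count: "countable S"
    and S_sub: "S \<subseteq> UNIV \<times> {z. norm z > 1}"
    and S_dense: "UNIV \<times> {z. norm z > 1} \<subseteq> closure S"
  shows "\<exists>(k :: nat \<Rightarrow> nat) (E2 :: linf set).
           strict_mono k \<and>
           (let q' = (\<lambda>n. cf_q \<theta> (k n)) in
             gdelta_in euclidean E2 \<and> closure E2 = UNIV \<and>
             (\<forall>u\<in>E2.
                (\<forall>z. summable (phi_term \<theta> q' u z)) \<and>
                holo_aut_C2 (A_map \<theta> q' u) \<and>
                A_map \<theta> q' u ` (UNIV \<times> unit_disc) = UNIV \<times> unit_disc \<and>
                (\<exists>\<Psi>. biholo2_on \<Psi> (UNIV \<times> unit_disc) \<and>
                   (\<forall>p\<in>UNIV \<times> unit_disc. \<Psi> (A_map \<theta> q' u p) = rot2 \<theta> (\<Psi> p))) \<and>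
                (\<forall>p\<in>UNIV \<times> {z. norm z > 1}.
                   \<not> bounded (range (\<lambda>N. (A_map \<theta> q' u ^^ N) p)) \<and>
                   (\<forall>\<epsilon>>0. \<exists>\<^sub>F N in sequentially. norm ((A_map \<theta> q' u ^^ N) p - p) < \<epsilon>)) \<and>
                (\<forall>p\<in>S. \<not> bounded (range (\<lambda>N.
                   onorm (frechet_derivative (A_map \<theta> q' u ^^ N) (at p)))))))"
proof -
  obtain k where k: "strict_mono k"
    and "lacunary_denominators \<theta> (\<lambda>n. cf_q \<theta> (k n)) (\<lambda>n. cf_q \<theta> (Suc (k n))) (\<lambda>n. cf_err \<theta> (Suc (k n)))"
    using lacunary_denominators_cf_subsequence[OF irr growth] .
  then interpret L: lacunary_denominators \<theta> "\<lambda>n. cf_q \<theta> (k n)" "\<lambda>n. cf_q \<theta> (Suc (k n))" "\<lambda>n. cf_err \<theta> (Suc (k n))"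
    by simp
  show ?thesis
    unfolding Let_def
  proof (intro exI[of _ k] exI[of _ L.E2] conjI ballI allI impI exI[of _ "L.Psi _"])
    show "gdelta_in euclidean L.E2"
      using L.open_E2 by (intro open_imp_gdelta_in) simp
    fix u
    assume "u \<in> L.E2"
    then obtain \<delta> where "\<delta> > 0" "\<exists>\<^sub>F j in sequentially. \<delta> \<le> cmod (L.coef u j)"
      unfolding L.E2_def by blast
    note unbounded = L.A_map_orbit_unbounded[OF this] L.A_map_derivative_unbounded[OF this]
    show "\<not> bounded (range (\<lambda>N. (A_map \<theta> (\<lambda>n. cf_q \<theta> (k n)) u ^^ N) p))"
      if "p \<in> UNIV \<times> {z. norm z > 1}" for p
      using unbounded(1) that by auto
    show "\<not> bounded (range (\<lambda>N. onorm (frechet_derivative (A_map \<theta> (\<lambda>n. cf_q \<theta> (k n)) u ^^ N) (at p))))"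
      if "p \<in> S" for p
      using unbounded(2) that S_sub by auto
  qed (use k L.closure_E2 L.summable_phi_term L.holo_aut_A_map L.A_map_image_disc
       L.biholo2_on_Psi L.Psi_conjugates_A_map L.A_map_recurrent in auto)
qed

end
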